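(* Let $F\subseteq P_{3,4}$ be a face and $J\subseteq J_F$ a linear subspace of codimension $1$ in $J_F$ with basis $q_1,\dots,q_k$. If there exists $h\in J_F\setminus J$ such that $q_1^2+\dots+q_k^2-\epsilon h^2$ is not nonnegative on $\mathbb P^2(\mathbb R)$ for every $\epsilon>0$, then there is a face $G\subsetneq F$ with $J=J_G$.
   Context: $H_k\subseteq\mathbb R[x,y,z]$: real ternary forms of degree $k$; $P_{3,4}=\{f\in H_4: f\ge0\text{ on }\mathbb P^2(\mathbb R)\}$. A face of $P_{3,4}$ is a convex subcone $F$ such that $a,b\in P_{3,4}$, $a+b\in F$ imply $a,b\in F$. For a face $F$, $J_F=\{q\in H_2:q^2\in F\}$ (a linear subspace). *)

theory Defs
  imports Complex_Main
begin

text \<open>Real ternary forms are represented by their polynomial functions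
  \<open>\<real>\<^sup>3 \<rightarrow> \<real>\<close> (faithful, as \<open>\<real>\<close> is infinite).\<close>
type_synonym form = "real \<Rightarrow> real \<Rightarrow> real \<Rightarrow> real"

definition H :: "nat \<Rightarrow> form set" where
  "H k = {f. \<exists>c :: nat \<Rightarrow> nat \<Rightarrow> real. \<forall>x y z.
      f x y z = (\<Sum>a\<le>k. \<Sum>b\<le>k - a. c a b * x ^ a * y ^ b * z ^ (k - a - b))}"

definition P34 :: "form set" where
  "P34 = {f \<in> H 4. \<forall>x y z. f x y z \<ge> 0}"

definition is_face :: "form set \<Rightarrow> bool" where
  "is_face F \<longleftrightarrow> F \<subseteq> P34 \<and> F \<noteq> {}
     \<and> (\<forall>a\<in>F. \<forall>b\<in>F. (\<lambda>x y z. a x y z + b x y z) \<in> F)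
     \<and> (\<forall>t::real. t \<ge> 0 \<longrightarrow> (\<forall>a\<in>F. (\<lambda>x y z. t * a x y z) \<in> F))
     \<and> (\<forall>a\<in>P34. \<forall>b\<in>P34. (\<lambda>x y z. a x y z + b x y z) \<in> F \<longrightarrow> a \<in> F \<and> b \<in> F)"

definition JF :: "form set \<Rightarrow> form set" where
  "JF F = {q \<in> H 2. (\<lambda>x y z. (q x y z)^2) \<in> F}"

definition span_list :: "form list \<Rightarrow> form set" where
  "span_list qs = {(\<lambda>x y z. \<Sum>i<length qs. c i * (qs ! i) x y z) | c :: nat \<Rightarrow> real. True}"

definition lin_indep_list :: "form list \<Rightarrow> bool" where
  "lin_indep_list qs \<longleftrightarrow> (\<forall>c :: nat \<Rightarrow> real.
     (\<forall>x y z. (\<Sum>i<length qs. c i * (qs ! i) x y z) = 0) \<longrightarrow> (\<forall>i<length qs. c i = 0))"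

definition is_basis_of :: "form list \<Rightarrow> form set \<Rightarrow> bool" where
  "is_basis_of qs J \<longleftrightarrow> lin_indep_list qs \<and> span_list qs = J"

definition codim1_in :: "form set \<Rightarrow> form set \<Rightarrow> bool" where
  "codim1_in J V \<longleftrightarrow> J \<subseteq> V
     \<and> (\<exists>g\<in>V. g \<notin> J \<and> V = {(\<lambda>x y z. j x y z + t * g x y z) | j t. j \<in> J})"

end

theory Submission
  imports Defs "HOL-Analysis.Convex"
begin

(* Let f = q_1^2 + ... + q_k^2.  Since every q_i lies in J \<subseteq> J_F,
   f belongs to F.  Take G to be the face of P_{3,4} generated by f: the
   nonnegative quartics g with g \<le> L * f for some L \<ge> 0.  G is a face contained
   in F; by Cauchy-Schwarz every q \<in> J has q^2 \<le> L * f, so J \<subseteq> J_G.  The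
   hypothesis on h says exactly that h^2 is not dominated by f, hence h^2 \<notin> G
   and G \<subset> F.  Finally the forms whose square is dominated by f form a linear
   space; it contains J and J_G but not h, and since J has codimension one in
   J_F this forces J_G \<subseteq> J. *)

lemma H_lin:
  assumes "a \<in> H k" "b \<in> H k"
  shows "(\<lambda>x y z. s * a x y z + t * b x y z) \<in> H k"
proof -
  obtain ca where ca: "\<forall>x y z. a x y z = (\<Sum>i\<le>k. \<Sum>j\<le>k - i. ca i j * x ^ i * y ^ j * z ^ (k - i - j))"
    using assms(1) unfolding H_def by blast
  obtain cb where cb: "\<forall>x y z. b x y z = (\<Sum>i\<le>k. \<Sum>j\<le>k - i. cb i j * x ^ i * y ^ j * z ^ (k - i - j))"
    using assms(2) unfolding H_def by blast
  show ?thesis unfolding H_def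
  proof (intro CollectI exI allI)
    fix x y z :: real
    show "s * a x y z + t * b x y z
        = (\<Sum>i\<le>k. \<Sum>j\<le>k - i. (s * ca i j + t * cb i j) * x ^ i * y ^ j * z ^ (k - i - j))"
      by (simp add: ca cb sum_distrib_left sum.distrib[symmetric] algebra_simps)
  qed
qed

lemma P34_cone:
  assumes "a \<in> P34" "b \<in> P34" "s \<ge> 0" "t \<ge> 0"
  shows "(\<lambda>x y z. s * a x y z + t * b x y z) \<in> P34"
  using assms H_lin[of a 4 b s t] unfolding P34_def by auto

lemma face_subset_P34: "is_face F \<Longrightarrow> F \<subseteq> P34"
  and face_nonempty: "is_face F \<Longrightarrow> F \<noteq> {}"
  and face_add: "is_face F \<Longrightarrow> a \<in> F \<Longrightarrow> b \<in> F \<Longrightarrow> (\<lambda>x y z. a x y z + b x y z) \<in> F"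
  and face_scale: "is_face F \<Longrightarrow> t \<ge> 0 \<Longrightarrow> a \<in> F \<Longrightarrow> (\<lambda>x y z. t * a x y z) \<in> F"
  and face_extreme: "is_face F \<Longrightarrow> a \<in> P34 \<Longrightarrow> b \<in> P34 \<Longrightarrow>
         (\<lambda>x y z. a x y z + b x y z) \<in> F \<Longrightarrow> a \<in> F"
  unfolding is_face_def by blast+

text \<open>A face contains every finite sum of its elements (the empty sum is the
  zero form, obtained by scaling any element by 0).\<close>
lemma face_sum:
  fixes n :: nat
  assumes "is_face F" "\<And>i. i < n \<Longrightarrow> g i \<in> F"
  shows "(\<lambda>x y z. \<Sum>i<n. g i x y z) \<in> F"
  using assms(2)
proof (induction n)
  case 0
  obtain a where "a \<in> F" using face_nonempty[OF assms(1)] by blast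
  from face_scale[OF assms(1) _ this, of 0] show ?case by simp
next
  case (Suc n)
  then have "(\<lambda>x y z. \<Sum>i<n. g i x y z) \<in> F" "g n \<in> F" by auto
  from face_add[OF assms(1) this] show ?case by simp
qed

section \<open>The face generated by a nonnegative quartic\<close>

definition dominated :: "form \<Rightarrow> form \<Rightarrow> bool" where
  "dominated f g \<longleftrightarrow> (\<exists>L\<ge>0. \<forall>x y z. g x y z \<le> L * f x y z)"

definition dom_face :: "form \<Rightarrow> form set" where
  "dom_face f = {g \<in> P34. dominated f g}"

lemma dom_face_is_face:
  assumes f: "f \<in> P34"
  shows "is_face (dom_face f)"
  unfolding is_face_def
proof (intro conjI ballI allI impI)
  show "dom_face f \<subseteq> P34" unfolding dom_face_def by blast
  have "dominated f f" unfolding dominated_def by (auto intro!: exI[of _ 1])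
  with f show "dom_face f \<noteq> {}" unfolding dom_face_def by blast
next
  fix a b assume "a \<in> dom_face f" "b \<in> dom_face f"
  then obtain La Lb where a: "a \<in> P34" "La \<ge> 0" "\<forall>x y z. a x y z \<le> La * f x y z"
    and b: "b \<in> P34" "Lb \<ge> 0" "\<forall>x y z. b x y z \<le> Lb * f x y z"
    unfolding dom_face_def dominated_def by blast
  have "(\<lambda>x y z. a x y z + b x y z) \<in> P34" using P34_cone[OF a(1) b(1), of 1 1] by simp
  moreover have "\<forall>x y z. a x y z + b x y z \<le> (La + Lb) * f x y z"
    using a(3) b(3) by (simp add: distrib_right add_mono)
  ultimately show "(\<lambda>x y z. a x y z + b x y z) \<in> dom_face f"
    using a(2) b(2) unfolding dom_face_def dominated_def by (auto intro!: exI[of _ "La + Lb"])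
next
  fix t :: real and a assume t: "t \<ge> 0" and "a \<in> dom_face f"
  then obtain L where a: "a \<in> P34" "L \<ge> 0" "\<forall>x y z. a x y z \<le> L * f x y z"
    unfolding dom_face_def dominated_def by blast
  have "(\<lambda>x y z. t * a x y z) \<in> P34" using P34_cone[OF a(1) a(1) t, of 0] by simp
  moreover have "\<forall>x y z. t * a x y z \<le> (t * L) * f x y z"
    using a(3) t by (simp add: mult_left_mono mult.assoc)
  ultimately show "(\<lambda>x y z. t * a x y z) \<in> dom_face f"
    using a(2) t unfolding dom_face_def dominated_def by (auto intro!: exI[of _ "t * L"])
next
  fix a b assume a: "a \<in> P34" and b: "b \<in> P34"
    and "(\<lambda>x y z. a x y z + b x y z) \<in> dom_face f"
  then obtain L where L: "L \<ge> 0" "\<forall>x y z. a x y z + b x y z \<le> L * f x y z"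
    unfolding dom_face_def dominated_def by auto
  have nonneg: "a x y z \<ge> 0" "b x y z \<ge> 0" for x y z using a b unfolding P34_def by auto
  have "a x y z \<le> L * f x y z" "b x y z \<le> L * f x y z" for x y z
    using L(2)[rule_format, of x y z] nonneg[of x y z] by linarith+
  then have "\<forall>x y z. a x y z \<le> L * f x y z" "\<forall>x y z. b x y z \<le> L * f x y z" by blast+
  then show "a \<in> dom_face f" "b \<in> dom_face f"
    using a b L(1) unfolding dom_face_def dominated_def by blast+
qed

text \<open>The face generated by an element of a face \<open>F\<close> lies inside \<open>F\<close>: if
  \<open>g \<le> L * f\<close>, then \<open>L * f = (L * f - g) + g\<close> splits an element of \<open>F\<close> into
  two nonnegative quartics.\<close>
lemma dom_face_subset:
  assumes F: "is_face F" and f: "f \<in> F"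
  shows "dom_face f \<subseteq> F"
proof
  fix g assume "g \<in> dom_face f"
  then obtain L where g: "g \<in> P34" "L \<ge> 0" "\<forall>x y z. g x y z \<le> L * f x y z"
    unfolding dom_face_def dominated_def by blast
  have fP: "f \<in> P34" using f face_subset_P34[OF F] by blast
  have "(\<lambda>x y z. L * f x y z + (-1) * g x y z) \<in> H 4"
    using fP g(1) H_lin unfolding P34_def by blast
  then have rest: "(\<lambda>x y z. L * f x y z - g x y z) \<in> P34"
    using g(3) unfolding P34_def by simp
  have "(\<lambda>x y z. g x y z + (L * f x y z - g x y z)) \<in> F"
    using face_scale[OF F g(2) f] by simp
  then show "g \<in> F" using face_extreme[OF F g(1) rest] by blast
qed

section \<open>Domination of squares\<close>

text \<open>The forms whose square is dominated by \<open>f\<close> form a linear space,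
  because \<open>(a u + b v)^2 \<le> 2 a^2 u^2 + 2 b^2 v^2\<close>.\<close>
lemma dominated_square_lin:
  assumes "dominated f (\<lambda>x y z. (u x y z)^2)" "dominated f (\<lambda>x y z. (v x y z)^2)"
  shows "dominated f (\<lambda>x y z. (a * u x y z + b * v x y z)^2)"
proof -
  obtain Lu Lv where Lu: "Lu \<ge> 0" "\<forall>x y z. (u x y z)^2 \<le> Lu * f x y z"
    and Lv: "Lv \<ge> 0" "\<forall>x y z. (v x y z)^2 \<le> Lv * f x y z"
    using assms unfolding dominated_def by blast
  have "(a * u x y z + b * v x y z)^2 \<le> (2 * (a^2 * Lu + b^2 * Lv)) * f x y z" for x y z
  proof -
    have "(a * u x y z + b * v x y z)^2 \<le> 2 * (a^2 * (u x y z)^2) + 2 * (b^2 * (v x y z)^2)"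
      using sum_squares_ge_zero[of "a * u x y z - b * v x y z" 0]
      by (simp add: power2_eq_square algebra_simps)
    also have "\<dots> \<le> 2 * (a^2 * (Lu * f x y z)) + 2 * (b^2 * (Lv * f x y z))"
      using Lu(2) Lv(2) by (intro add_mono mult_left_mono) auto
    finally show ?thesis by (simp add: algebra_simps)
  qed
  then show ?thesis unfolding dominated_def using Lu(1) Lv(1)
    by (intro exI[of _ "2 * (a^2 * Lu + b^2 * Lv)"]) simp
qed

definition sum_sq :: "form list \<Rightarrow> form" where
  "sum_sq qs = (\<lambda>x y z. \<Sum>i<length qs. ((qs ! i) x y z)^2)"

text \<open>Cauchy-Schwarz: the square of any form in the span of \<open>qs\<close> is dominated
  by the sum of squares of \<open>qs\<close>.\<close>
lemma span_square_dominated: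
  assumes "q \<in> span_list qs"
  shows "dominated (sum_sq qs) (\<lambda>x y z. (q x y z)^2)"
proof -
  obtain c where q: "q = (\<lambda>x y z. \<Sum>i<length qs. c i * (qs ! i) x y z)"
    using assms unfolding span_list_def by blast
  show ?thesis unfolding dominated_def sum_sq_def q
    by (intro exI[of _ "\<Sum>i<length qs. (c i)^2"] conjI allI Cauchy_Schwarz_ineq_sum)
       (simp add: sum_nonneg)
qed

text \<open>If no \<open>f - \<epsilon> h^2\<close> with \<open>\<epsilon> > 0\<close> is nonnegative, then \<open>h^2\<close> is not dominated
  by the nonnegative form \<open>f\<close> (else \<open>\<epsilon> = 1/(L+1)\<close> would work).\<close>
lemma not_dominated_square:
  assumes f_nonneg: "\<forall>x y z. f x y z \<ge> 0"
    and no_eps: "\<forall>\<epsilon>::real. \<epsilon> > 0 \<longrightarrow> \<not> (\<forall>x y z. f x y z - \<epsilon> * (h x y z)^2 \<ge> 0)"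
  shows "\<not> dominated f (\<lambda>x y z. (h x y z)^2)"
proof
  assume "dominated f (\<lambda>x y z. (h x y z)^2)"
  then obtain L where L: "L \<ge> 0" "\<forall>x y z. (h x y z)^2 \<le> L * f x y z"
    unfolding dominated_def by blast
  have "f x y z - (1 / (L + 1)) * (h x y z)^2 \<ge> 0" for x y z
  proof -
    have "(h x y z)^2 \<le> (L + 1) * f x y z"
      using L f_nonneg[rule_format, of x y z] by (simp add: distrib_right add_increasing2)
    then show ?thesis using L(1) by (simp add: field_simps)
  qed
  moreover have "(1 / (L + 1) :: real) > 0" using L(1) by simp
  ultimately show False using no_eps by blast
qed

section \<open>Spans and codimension one\<close>

lemma span_list_nth:
  assumes i: "i < length qs"
  shows "qs ! i \<in> span_list qs"
proof -
  define e where "e = (\<lambda>x y z. \<Sum>j<length qs. (if j = i then 1 else 0) * (qs ! j) x y z)"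
  have "e \<in> span_list qs" unfolding span_list_def e_def
    by (intro CollectI exI[of _ "\<lambda>j. if j = i then 1 else 0"] conjI refl TrueI)
  moreover have "e = qs ! i"
  proof (intro ext)
    fix x y z
    have "e x y z = (\<Sum>j<length qs. if j = i then (qs ! j) x y z else 0)"
      unfolding e_def by (rule sum.cong) auto
    also have "\<dots> = (qs ! i) x y z" using i by simp
    finally show "e x y z = (qs ! i) x y z" .
  qed
  ultimately show ?thesis by simp
qed

lemma span_list_lin:
  assumes "u \<in> span_list qs" "v \<in> span_list qs"
  shows "(\<lambda>x y z. a * u x y z + b * v x y z) \<in> span_list qs"
proof -
  obtain cu cv where u: "u = (\<lambda>x y z. \<Sum>i<length qs. cu i * (qs ! i) x y z)"
    and v: "v = (\<lambda>x y z. \<Sum>i<length qs. cv i * (qs ! i) x y z)"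
    using assms unfolding span_list_def by blast
  have "a * u x y z + b * v x y z = (\<Sum>i<length qs. (a * cu i + b * cv i) * (qs ! i) x y z)"
    for x y z
    unfolding u v by (simp add: sum_distrib_left sum.distrib distrib_right mult.assoc)
  then have "(\<lambda>x y z. a * u x y z + b * v x y z)
      = (\<lambda>x y z. \<Sum>i<length qs. (a * cu i + b * cv i) * (qs ! i) x y z)"
    by (intro ext)
  then show ?thesis unfolding span_list_def by auto
qed

lemma codim1_decompose:
  assumes codim: "codim1_in (span_list qs) V"
    and g: "g \<in> V" "g \<notin> span_list qs" and h: "h \<in> V"
  obtains j s where "j \<in> span_list qs" "h = (\<lambda>x y z. j x y z + s * g x y z)"
proof -
  obtain g0 where V: "V = {(\<lambda>x y z. j x y z + t * g0 x y z) | j t. j \<in> span_list qs}"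
    using codim unfolding codim1_in_def by blast
  obtain jg tg where jg: "jg \<in> span_list qs" and g_eq: "g = (\<lambda>x y z. jg x y z + tg * g0 x y z)"
    using g(1) V by blast
  obtain jh th where jh: "jh \<in> span_list qs" and h_eq: "h = (\<lambda>x y z. jh x y z + th * g0 x y z)"
    using h V by blast
  have "tg \<noteq> 0" using g(2) jg g_eq by auto
  define s where "s = th / tg"
  have "h x y z = (1 * jh x y z + (- s) * jg x y z) + s * g x y z" for x y z
    using \<open>tg \<noteq> 0\<close> unfolding h_eq g_eq s_def by (simp add: field_simps)
  then have "h = (\<lambda>x y z. (1 * jh x y z + (- s) * jg x y z) + s * g x y z)" by blast
  moreover have "(\<lambda>x y z. 1 * jh x y z + (- s) * jg x y z) \<in> span_list qs"
    using span_list_lin[OF jh jg] .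
  ultimately show ?thesis using that by blast
qed

lemma codim1_trap:
  assumes codim: "codim1_in (span_list qs) V"
    and P_lin: "\<And>u v a b. P u \<Longrightarrow> P v \<Longrightarrow> P (\<lambda>x y z. a * u x y z + b * v x y z)"
    and P_span: "\<And>q. q \<in> span_list qs \<Longrightarrow> P q"
    and h: "h \<in> V" "\<not> P h"
    and g: "g \<in> V" "P g"
  shows "g \<in> span_list qs"
proof (rule ccontr)
  assume "g \<notin> span_list qs"
  then obtain j s where "j \<in> span_list qs" "h = (\<lambda>x y z. j x y z + s * g x y z)"
    using codim1_decompose[OF codim g(1) _ h(1)] by blast
  then have "P h" using P_lin[OF P_span g(2), of j 1 s] by simp
  with h(2) show False ..
qed

lemma sum_sq_in_face:
  assumes F: "is_face F" and span: "span_list qs \<subseteq> JF F"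
  shows "sum_sq qs \<in> F"
proof -
  have "(\<lambda>x y z. ((qs ! i) x y z)^2) \<in> F" if "i < length qs" for i
    using span_list_nth[OF that] span unfolding JF_def by blast
  then show ?thesis unfolding sum_sq_def
    by (rule face_sum[OF F, of "length qs" "\<lambda>i x y z. ((qs ! i) x y z)^2"])
qed

text \<open>Squares of elements of \<open>J\<close> are
  dominated by Cauchy-Schwarz; conversely the forms with dominated square form a
  linear space containing \<open>J\<close> but not \<open>h\<close>, so they meet \<open>J_F\<close> only in \<open>J\<close>.\<close>
lemma JF_dom_face_sum_sq:
  assumes F: "is_face F" and codim: "codim1_in (span_list qs) (JF F)"
    and h: "h \<in> JF F" and h_undom: "\<not> dominated (sum_sq qs) (\<lambda>x y z. (h x y z)^2)"
  shows "JF (dom_face (sum_sq qs)) = span_list qs"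
proof
  have span_JF: "span_list qs \<subseteq> JF F" using codim unfolding codim1_in_def by blast
  have GF: "dom_face (sum_sq qs) \<subseteq> F"
    using dom_face_subset[OF F sum_sq_in_face[OF F span_JF]] .
  show "JF (dom_face (sum_sq qs)) \<subseteq> span_list qs"
  proof
    fix g assume "g \<in> JF (dom_face (sum_sq qs))"
    then have "g \<in> JF F" "dominated (sum_sq qs) (\<lambda>x y z. (g x y z)^2)"
      using GF unfolding JF_def dom_face_def by auto
    then show "g \<in> span_list qs"
      using codim1_trap[where P = "\<lambda>q. dominated (sum_sq qs) (\<lambda>x y z. (q x y z)^2)", OF codim]
        dominated_square_lin span_square_dominated h h_undom
      by blast
  qed
  show "span_list qs \<subseteq> JF (dom_face (sum_sq qs))"
  proof
    fix q assume "q \<in> span_list qs"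
    then have "q \<in> JF F" "dominated (sum_sq qs) (\<lambda>x y z. (q x y z)^2)"
      using span_JF span_square_dominated by auto
    then show "q \<in> JF (dom_face (sum_sq qs))" using face_subset_P34[OF F]
      unfolding JF_def dom_face_def by blast
  qed
qed

text \<open>The required face is the one generated by \<open>q_1^2 + ... + q_k^2\<close>; it is
  proper because it misses \<open>h^2 \<in> F\<close>.\<close>
theorem mainTheorem14:
  fixes F J :: "form set" and qs :: "form list"
  assumes "is_face F"
    and "codim1_in J (JF F)"
    and "is_basis_of qs J"
    and "\<exists>h \<in> JF F - J. \<forall>\<epsilon>::real. \<epsilon> > 0 \<longrightarrow>
           \<not> (\<forall>x y z. (\<Sum>i<length qs. ((qs ! i) x y z)^2) - \<epsilon> * (h x y z)^2 \<ge> 0)"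
  shows "\<exists>G. is_face G \<and> G \<subset> F \<and> J = JF G"
proof -
  have J: "J = span_list qs" using assms(3) unfolding is_basis_of_def by blast
  have codim: "codim1_in (span_list qs) (JF F)" using assms(2) unfolding J .
  then have fF: "sum_sq qs \<in> F"
    using sum_sq_in_face[OF assms(1)] unfolding codim1_in_def by blast
  have fP: "sum_sq qs \<in> P34" using fF face_subset_P34[OF assms(1)] by blast
  obtain h where h: "h \<in> JF F" and no_eps: "\<forall>\<epsilon>::real. \<epsilon> > 0 \<longrightarrow>
      \<not> (\<forall>x y z. sum_sq qs x y z - \<epsilon> * (h x y z)^2 \<ge> 0)"
    using assms(4) unfolding sum_sq_def by blast
  have h_undom: "\<not> dominated (sum_sq qs) (\<lambda>x y z. (h x y z)^2)"
    using not_dominated_square[OF _ no_eps] fP unfolding P34_def by blast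
  define G where "G = dom_face (sum_sq qs)"
  have "is_face G" unfolding G_def using dom_face_is_face[OF fP] .
  moreover have "G \<subset> F"
    using dom_face_subset[OF assms(1) fF] h h_undom unfolding G_def JF_def dom_face_def by blast
  moreover have "J = JF G" unfolding G_def J using JF_dom_face_sum_sq[OF assms(1) codim h h_undom] ..
  ultimately show ?thesis by blast
qed

end
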